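(* There is an absolute constant $C$ such that for every $n$ and every $0<B=B(n)<n$ there exists a subspace $\mathcal{M}\subseteq\mathbb{C}^{2^n}$ of dimension at least $2^B$ that is $(\mathcal{E}_{\mathrm{bitflip}},\varepsilon)$ immune with $\varepsilon\le C\,\frac{B\log n}{n}$.
   Context: $\mathbb{C}^{2^n}$ has standard basis $\{|x\rangle : x\in\{0,1\}^n\}$. For $i\in[n]$, $S\subseteq\{0,1\}^{n-1}$, $E_{i,S}$ is the linear operator with $E_{i,S}|x\rangle=|x\oplus e_i\rangle$ if $(x_1,\dots,x_{i-1},x_{i+1},\dots,x_n)\in S$ and $E_{i,S}|x\rangle=|x\rangle$ otherwise (a controlled bit flip of qubit $i$); $\mathcal{E}_{\mathrm{bitflip}}=\{E_{i,S}: i\in[n], S\subseteq\{0,1\}^{n-1}\}$. A subspace $\mathcal{M}$ is $(\mathcal{E},\varepsilon)$ immune if for every $X\in\mathcal{E}$ and every $\phi\in\mathcal{M}$, $|\phi^*X\phi|\ge(1-\varepsilon)|\phi^*\phi|$. *)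

theory Defs
  imports Complex_Main
begin

text \<open>Basis states |x>, x in {0,1}^n, are bool lists of length n (qubits indexed 0..n-1).
  A vector of C^(2^n) is a function bool list => complex vanishing outside length-n lists.\<close>

type_synonym qvec = "bool list \<Rightarrow> complex"

definition basis :: "nat \<Rightarrow> bool list set" where
  "basis n = {x. length x = n}"

definition is_qvec :: "nat \<Rightarrow> qvec \<Rightarrow> bool" where
  "is_qvec n \<phi> \<longleftrightarrow> (\<forall>x. length x \<noteq> n \<longrightarrow> \<phi> x = 0)"

definition is_subspace :: "nat \<Rightarrow> qvec set \<Rightarrow> bool" where
  "is_subspace n M \<longleftrightarrow> (\<forall>\<phi>\<in>M. is_qvec n \<phi>) \<and> (\<lambda>_. 0) \<in> M \<and>
     (\<forall>\<phi>\<in>M. \<forall>\<psi>\<in>M. (\<lambda>x. \<phi> x + \<psi> x) \<in> M) \<and>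
     (\<forall>c. \<forall>\<phi>\<in>M. (\<lambda>x. c * \<phi> x) \<in> M)"

definition dim_at_least :: "nat \<Rightarrow> qvec set \<Rightarrow> nat \<Rightarrow> bool" where
  "dim_at_least n M k \<longleftrightarrow> (\<exists>v :: nat \<Rightarrow> qvec. (\<forall>i<k. v i \<in> M) \<and>
     (\<forall>c :: nat \<Rightarrow> complex. (\<forall>x \<in> basis n. (\<Sum>i<k. c i * v i x) = 0) \<longrightarrow> (\<forall>i<k. c i = 0)))"

definition rest :: "nat \<Rightarrow> bool list \<Rightarrow> bool list" where
  "rest i x = take i x @ drop (Suc i) x"

definition flip_perm :: "nat \<Rightarrow> bool list set \<Rightarrow> bool list \<Rightarrow> bool list" where
  "flip_perm i S x = (if rest i x \<in> S then x[i := \<not> x ! i] else x)"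

text \<open>E_{i,S} acting on vectors: E|x> = |flip_perm x>, so (E phi)(y) = phi(flip_perm y)
  (flip_perm is an involution).\<close>
definition E_op :: "nat \<Rightarrow> bool list set \<Rightarrow> qvec \<Rightarrow> qvec" where
  "E_op i S \<phi> = (\<lambda>y. \<phi> (flip_perm i S y))"

definition E_bitflip :: "nat \<Rightarrow> (qvec \<Rightarrow> qvec) set" where
  "E_bitflip n = {E_op i S | i S. i < n \<and> S \<subseteq> basis (n - 1)}"

definition inner_q :: "nat \<Rightarrow> qvec \<Rightarrow> qvec \<Rightarrow> complex" where
  "inner_q n \<phi> \<psi> = (\<Sum>x\<in>basis n. cnj (\<phi> x) * \<psi> x)"

definition immune :: "nat \<Rightarrow> (qvec \<Rightarrow> qvec) set \<Rightarrow> real \<Rightarrow> qvec set \<Rightarrow> bool" where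
  "immune n \<E> \<epsilon> M \<longleftrightarrow> (\<forall>X\<in>\<E>. \<forall>\<phi>\<in>M.
     norm (inner_q n \<phi> (X \<phi>)) \<ge> (1 - \<epsilon>) * norm (inner_q n \<phi> \<phi>))"

end

theory Submission
  imports Defs
begin

text \<open>Split the \<open>n\<close> qubits into \<open>B\<close> blocks of \<open>m = n div B\<close> qubits and let \<open>f\<^sub>j\<close> be the
  magnetisation of block \<open>j\<close>, i.e. the sum of the signs \<open>\<plusminus>1\<close> of its bits. The code is spanned by
  the \<open>2\<^sup>B\<close> products \<open>\<Prod>j\<in>T. f\<^sub>j\<close>, \<open>T \<subseteq> {..<B}\<close>, which are pairwise orthogonal. A code
  vector decomposes as \<open>\<psi> = A + f\<^sub>j G\<close> with \<open>A\<close>, \<open>G\<close> independent of the bits of block \<open>j\<close>.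
  Flipping a bit of block \<open>j\<close> changes \<open>f\<^sub>j\<close> by \<open>\<plusminus>2\<close>, so it moves \<open>\<psi>\<close> by at most \<open>4\<parallel>G\<parallel>\<^sup>2\<close>
  in squared norm, whereas \<open>\<parallel>\<psi>\<parallel>\<^sup>2 = \<parallel>A\<parallel>\<^sup>2 + m\<parallel>G\<parallel>\<^sup>2\<close> because \<open>f\<^sub>j\<close> has mean \<open>0\<close> and mean
  square \<open>m\<close> over the bits of its block. A controlled flip acts at each basis state either
  trivially or as the plain flip, so \<open>Re \<langle>\<psi>, E\<psi>\<rangle> \<ge> (1 - 2/m)\<parallel>\<psi>\<parallel>\<^sup>2\<close>, and
  \<open>2/m \<le> 4B/n \<le> (4 / ln 2) B ln n / n\<close>.\<close>

definition bit_sign :: "nat \<Rightarrow> bool list \<Rightarrow> real" where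
  "bit_sign k x = (if x ! k then -1 else 1)"

definition flip_qubit :: "nat \<Rightarrow> bool list \<Rightarrow> bool list" where
  "flip_qubit k x = x[k := \<not> x ! k]"

definition flip_invariant :: "nat \<Rightarrow> (bool list \<Rightarrow> 'a) \<Rightarrow> bool" where
  "flip_invariant k h \<longleftrightarrow> (\<forall>x. h (flip_qubit k x) = h x)"

definition spin_sum :: "nat set \<Rightarrow> bool list \<Rightarrow> real" where
  "spin_sum K x = (\<Sum>k\<in>K. bit_sign k x)"

definition sq_norm :: "nat \<Rightarrow> qvec \<Rightarrow> real" where
  "sq_norm n \<psi> = (\<Sum>x\<in>basis n. (cmod (\<psi> x))\<^sup>2)"

definition flip_energy :: "nat \<Rightarrow> nat \<Rightarrow> qvec \<Rightarrow> real" where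
  "flip_energy n i \<psi> = (\<Sum>x\<in>basis n. (cmod (\<psi> x - \<psi> (flip_qubit i x)))\<^sup>2)"

lemma finite_basis: "finite (basis n)"
  unfolding basis_def by (rule finite_list_length)

lemma length_flip_qubit [simp]: "length (flip_qubit k x) = length x"
  by (simp add: flip_qubit_def)

lemma flip_qubit_flip_qubit [simp]: "flip_qubit k (flip_qubit k x) = x"
  by (cases "k < length x") (auto simp: flip_qubit_def list_update_beyond)

lemma bit_sign_flip_qubit_other: "k \<noteq> i \<Longrightarrow> bit_sign i (flip_qubit k x) = bit_sign i x"
  by (simp add: bit_sign_def flip_qubit_def)

lemma bit_sign_flip_qubit_same: "i < length x \<Longrightarrow> bit_sign i (flip_qubit i x) = - bit_sign i x"
  by (simp add: bit_sign_def flip_qubit_def)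

lemma bit_sign_mult_self [simp]: "bit_sign k x * bit_sign k x = 1"
  by (simp add: bit_sign_def)

lemma abs_bit_sign [simp]: "\<bar>bit_sign k x\<bar> = 1"
  by (simp add: bit_sign_def)

lemma sum_basis_flip_qubit: "(\<Sum>x\<in>basis n. g (flip_qubit i x)) = (\<Sum>x\<in>basis n. g x)"
  by (rule sum.reindex_bij_witness[of _ "flip_qubit i" "flip_qubit i"]) (auto simp: basis_def)

lemma flip_invariant_bit_sign: "k \<noteq> i \<Longrightarrow> flip_invariant k (bit_sign i)"
  by (simp add: flip_invariant_def bit_sign_flip_qubit_other)

lemma flip_invariant_compose: "flip_invariant k a \<Longrightarrow> flip_invariant k (\<lambda>x. f (a x))"
  by (simp add: flip_invariant_def)

lemma flip_invariant_compose2: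
  "flip_invariant k a \<Longrightarrow> flip_invariant k b \<Longrightarrow> flip_invariant k (\<lambda>x. f (a x) (b x))"
  by (simp add: flip_invariant_def)

lemma flip_invariant_sum:
  "(\<And>t. t \<in> I \<Longrightarrow> flip_invariant k (g t)) \<Longrightarrow> flip_invariant k (\<lambda>x. \<Sum>t\<in>I. g t x)"
  by (simp add: flip_invariant_def)

lemma flip_invariant_prod:
  "(\<And>t. t \<in> I \<Longrightarrow> flip_invariant k (g t)) \<Longrightarrow> flip_invariant k (\<lambda>x. \<Prod>t\<in>I. g t x)"
  by (simp add: flip_invariant_def)

lemma flip_invariant_spin_sum: "k \<notin> K \<Longrightarrow> flip_invariant k (spin_sum K)"
  unfolding spin_sum_def by (rule flip_invariant_sum) (auto intro: flip_invariant_bit_sign)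

lemma spin_sum_flip_qubit:
  assumes "finite K" "i \<in> K" "i < length x"
  shows "spin_sum K x - spin_sum K (flip_qubit i x) = 2 * bit_sign i x"
proof -
  have "spin_sum K x - spin_sum K (flip_qubit i x) = (\<Sum>k\<in>K. bit_sign k x - bit_sign k (flip_qubit i x))"
    by (simp add: spin_sum_def sum_subtractf)
  also have "\<dots> = (\<Sum>k\<in>K. if k = i then 2 * bit_sign i x else 0)"
    using assms by (intro sum.cong refl) (auto simp: bit_sign_flip_qubit_other bit_sign_flip_qubit_same)
  finally show ?thesis
    using assms by simp
qed

lemma sum_bit_sign_mult_invariant:
  assumes "i < n" "flip_invariant i h"
  shows "(\<Sum>x\<in>basis n. bit_sign i x * h x) = 0"
proof -
  have "(\<Sum>x\<in>basis n. bit_sign i x * h x) = (\<Sum>x\<in>basis n. bit_sign i (flip_qubit i x) * h (flip_qubit i x))"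
    by (rule sum_basis_flip_qubit[symmetric])
  also have "\<dots> = - (\<Sum>x\<in>basis n. bit_sign i x * h x)"
    using assms by (auto simp: basis_def bit_sign_flip_qubit_same flip_invariant_def sum_negf[symmetric]
        intro: sum.cong)
  finally show ?thesis
    by simp
qed

lemma sum_spin_sum_mult_invariant:
  assumes "K \<subseteq> {..<n}" "\<And>k. k \<in> K \<Longrightarrow> flip_invariant k h"
  shows "(\<Sum>x\<in>basis n. spin_sum K x * h x) = 0"
proof -
  have "(\<Sum>x\<in>basis n. spin_sum K x * h x) = (\<Sum>k\<in>K. \<Sum>x\<in>basis n. bit_sign k x * h x)"
    unfolding spin_sum_def sum_distrib_right by (rule sum.swap)
  also have "\<dots> = 0"
    using assms by (intro sum.neutral ballI sum_bit_sign_mult_invariant) auto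
  finally show ?thesis .
qed

text \<open>Off-diagonal terms \<open>bit_sign k * bit_sign k'\<close> of \<open>spin_sum K\<^sup>2\<close> average out, diagonal ones are \<open>1\<close>.\<close>

lemma sum_spin_sum_sq_mult_invariant:
  assumes K: "K \<subseteq> {..<n}" and inv: "\<And>k. k \<in> K \<Longrightarrow> flip_invariant k h"
  shows "(\<Sum>x\<in>basis n. (spin_sum K x)\<^sup>2 * h x) = real (card K) * (\<Sum>x\<in>basis n. h x)"
proof -
  have fin: "finite K"
    using K finite_subset by blast
  have cross: "(\<Sum>x\<in>basis n. bit_sign k x * (bit_sign k' x * h x)) = (if k' = k then (\<Sum>x\<in>basis n. h x) else 0)"
    if "k \<in> K" "k' \<in> K" for k k'
  proof (cases "k' = k")
    case True
    then show ?thesis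
      by (simp add: mult.assoc[symmetric])
  next
    case False
    have "flip_invariant k (\<lambda>x. bit_sign k' x * h x)"
      using False that inv by (intro flip_invariant_compose2[where f = "(*)"] flip_invariant_bit_sign) auto
    then show ?thesis
      using False that K sum_bit_sign_mult_invariant[of k n] by auto
  qed
  have "(\<Sum>x\<in>basis n. (spin_sum K x)\<^sup>2 * h x)
      = (\<Sum>x\<in>basis n. \<Sum>k\<in>K. \<Sum>k'\<in>K. bit_sign k x * (bit_sign k' x * h x))"
    by (simp add: spin_sum_def power2_eq_square sum_distrib_left sum_distrib_right mult_ac)
  also have "\<dots> = (\<Sum>k\<in>K. \<Sum>k'\<in>K. \<Sum>x\<in>basis n. bit_sign k x * (bit_sign k' x * h x))"
    by (subst sum.swap) (intro sum.cong refl sum.swap)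
  also have "\<dots> = (\<Sum>k\<in>K. \<Sum>k'\<in>K. if k' = k then (\<Sum>x\<in>basis n. h x) else 0)"
    using cross by (intro sum.cong refl) auto
  also have "\<dots> = real (card K) * (\<Sum>x\<in>basis n. h x)"
    using fin by simp
  finally show ?thesis .
qed

lemma cmod_diff_sq: "(cmod (a - b))\<^sup>2 = (cmod a)\<^sup>2 + (cmod b)\<^sup>2 - 2 * Re (cnj a * b)"
  by (simp only: cmod_power2) (simp add: power2_eq_square algebra_simps)

lemma cmod_add_real_mult_sq:
  "(cmod (a + complex_of_real r * g))\<^sup>2 = (cmod a)\<^sup>2 + 2 * (r * Re (cnj a * g)) + r\<^sup>2 * (cmod g)\<^sup>2"
  by (simp only: cmod_power2) (simp add: power2_eq_square algebra_simps)

lemma norm_inner_q_self: "norm (inner_q n \<psi> \<psi>) = sq_norm n \<psi>"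
proof -
  have "inner_q n \<psi> \<psi> = complex_of_real (sq_norm n \<psi>)"
    unfolding inner_q_def sq_norm_def of_real_sum
    by (intro sum.cong refl) (metis complex_norm_square mult.commute)
  then have "norm (inner_q n \<psi> \<psi>) = \<bar>sq_norm n \<psi>\<bar>"
    by (simp only: norm_of_real)
  then show ?thesis
    by (simp add: sq_norm_def sum_nonneg)
qed

lemma length_flip_perm [simp]: "length (flip_perm i S x) = length x"
  by (simp add: flip_perm_def)

lemma flip_perm_flip_perm [simp]: "flip_perm i S (flip_perm i S x) = x"
  by (cases "i < length x") (auto simp: flip_perm_def rest_def list_update_beyond)

lemma flip_perm_cases: "flip_perm i S x = x \<or> flip_perm i S x = flip_qubit i x"
  by (simp add: flip_perm_def flip_qubit_def)

text \<open>Since \<open>E_op i S\<close> permutes the basis, \<open>2 Re \<langle>\<psi>, E\<psi>\<rangle> = 2\<parallel>\<psi>\<parallel>\<^sup>2 - \<parallel>\<psi> - E\<psi>\<parallel>\<^sup>2\<close>.\<close>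

lemma inner_E_op_ge:
  assumes "flip_energy n i \<psi> \<le> 2 * e * sq_norm n \<psi>"
  shows "(1 - e) * norm (inner_q n \<psi> \<psi>) \<le> norm (inner_q n \<psi> (E_op i S \<psi>))"
proof -
  let ?P = "flip_perm i S"
  define D where "D = (\<Sum>x\<in>basis n. (cmod (\<psi> x - \<psi> (?P x)))\<^sup>2)"
  have "(\<Sum>x\<in>basis n. (cmod (\<psi> (?P x)))\<^sup>2) = (\<Sum>x\<in>basis n. (cmod (\<psi> x))\<^sup>2)"
    by (rule sum.reindex_bij_witness[of _ ?P ?P]) (auto simp: basis_def)
  then have "D = 2 * sq_norm n \<psi> - 2 * Re (inner_q n \<psi> (E_op i S \<psi>))"
    unfolding D_def sq_norm_def
    by (simp add: cmod_diff_sq sum.distrib sum_subtractf inner_q_def E_op_def Re_sum sum_distrib_left)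
  moreover have "D \<le> flip_energy n i \<psi>"
    unfolding D_def flip_energy_def
  proof (rule sum_mono)
    fix x
    show "(cmod (\<psi> x - \<psi> (?P x)))\<^sup>2 \<le> (cmod (\<psi> x - \<psi> (flip_qubit i x)))\<^sup>2"
      using flip_perm_cases[of i S x] by auto
  qed
  ultimately have "(1 - e) * sq_norm n \<psi> \<le> Re (inner_q n \<psi> (E_op i S \<psi>))"
    using assms by (simp add: algebra_simps)
  also have "\<dots> \<le> norm (inner_q n \<psi> (E_op i S \<psi>))"
    by (rule complex_Re_le_cmod)
  finally show ?thesis
    by (simp add: norm_inner_q_self)
qed

lemma flip_energy_spin_decomposition:
  assumes K: "finite K" "i \<in> K" "i < n"
    and inv: "flip_invariant i A" "flip_invariant i G"
    and \<psi>: "\<And>x. \<psi> x = A x + complex_of_real (spin_sum K x) * G x"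
  shows "flip_energy n i \<psi> = 4 * sq_norm n G"
proof -
  have "(cmod (\<psi> x - \<psi> (flip_qubit i x)))\<^sup>2 = 4 * (cmod (G x))\<^sup>2" if "x \<in> basis n" for x
  proof -
    have "\<psi> x - \<psi> (flip_qubit i x) = complex_of_real (spin_sum K x - spin_sum K (flip_qubit i x)) * G x"
      using inv unfolding \<psi> flip_invariant_def by (simp add: algebra_simps)
    also have "\<dots> = complex_of_real (2 * bit_sign i x) * G x"
      using spin_sum_flip_qubit[of K i x] K that by (simp add: basis_def)
    finally show ?thesis
      by (simp add: norm_mult power_mult_distrib)
  qed
  then show ?thesis
    by (simp add: flip_energy_def sq_norm_def sum_distrib_left)
qed

lemma sq_norm_spin_decomposition:
  assumes K: "K \<subseteq> {..<n}"
    and inv: "\<And>k. k \<in> K \<Longrightarrow> flip_invariant k A" "\<And>k. k \<in> K \<Longrightarrow> flip_invariant k G"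
    and \<psi>: "\<And>x. \<psi> x = A x + complex_of_real (spin_sum K x) * G x"
  shows "sq_norm n \<psi> = sq_norm n A + real (card K) * sq_norm n G"
proof -
  have cross: "(\<Sum>x\<in>basis n. spin_sum K x * Re (cnj (A x) * G x)) = 0"
    using K inv by (intro sum_spin_sum_mult_invariant flip_invariant_compose2[where f = "\<lambda>a g. Re (cnj a * g)"]) auto
  have square: "(\<Sum>x\<in>basis n. (spin_sum K x)\<^sup>2 * (cmod (G x))\<^sup>2) = real (card K) * sq_norm n G"
    unfolding sq_norm_def using K inv
    by (intro sum_spin_sum_sq_mult_invariant flip_invariant_compose[where f = "\<lambda>g. (cmod g)\<^sup>2"]) auto
  have "sq_norm n \<psi> = (\<Sum>x\<in>basis n. (cmod (A x))\<^sup>2 + 2 * (spin_sum K x * Re (cnj (A x) * G x))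
      + (spin_sum K x)\<^sup>2 * (cmod (G x))\<^sup>2)"
    unfolding sq_norm_def \<psi> cmod_add_real_mult_sq ..
  also have "\<dots> = sq_norm n A + real (card K) * sq_norm n G"
    using cross square by (simp add: sum.distrib sq_norm_def sum_distrib_left[symmetric])
  finally show ?thesis .
qed

lemma flip_energy_spin_decomposition_le:
  assumes K: "K \<subseteq> {..<n}" "i \<in> K"
    and inv: "\<And>k. k \<in> K \<Longrightarrow> flip_invariant k A" "\<And>k. k \<in> K \<Longrightarrow> flip_invariant k G"
    and \<psi>: "\<And>x. \<psi> x = A x + complex_of_real (spin_sum K x) * G x"
  shows "flip_energy n i \<psi> \<le> 4 / real (card K) * sq_norm n \<psi>"
proof -
  have fin: "finite K"
    using K(1) finite_subset by blast
  then have "card K > 0"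
    using K(2) card_gt_0_iff by blast
  moreover have "sq_norm n A \<ge> 0"
    by (simp add: sq_norm_def sum_nonneg)
  ultimately show ?thesis
    using flip_energy_spin_decomposition[OF fin K(2) _ inv[OF K(2)] \<psi>]
      sq_norm_spin_decomposition[OF K(1) inv \<psi>] K
    by (auto simp: field_simps)
qed

definition lin_span :: "'i set \<Rightarrow> ('i \<Rightarrow> qvec) \<Rightarrow> qvec set" where
  "lin_span I v = {\<psi>. \<exists>c. \<psi> = (\<lambda>x. \<Sum>t\<in>I. c t * v t x)}"

lemma is_subspace_lin_span:
  assumes "\<And>t. t \<in> I \<Longrightarrow> is_qvec n (v t)"
  shows "is_subspace n (lin_span I v)"
  unfolding is_subspace_def
proof (intro conjI ballI allI)
  fix \<phi> assume "\<phi> \<in> lin_span I v"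
  then show "is_qvec n \<phi>"
    using assms by (auto simp: lin_span_def is_qvec_def)
next
  show "(\<lambda>_. 0) \<in> lin_span I v"
    unfolding lin_span_def by (intro CollectI exI[of _ "\<lambda>_. 0"]) simp
next
  fix \<phi> \<psi> assume "\<phi> \<in> lin_span I v" "\<psi> \<in> lin_span I v"
  then obtain c d where "\<phi> = (\<lambda>x. \<Sum>t\<in>I. c t * v t x)" "\<psi> = (\<lambda>x. \<Sum>t\<in>I. d t * v t x)"
    by (auto simp: lin_span_def)
  then show "(\<lambda>x. \<phi> x + \<psi> x) \<in> lin_span I v"
    unfolding lin_span_def by (intro CollectI exI[of _ "\<lambda>t. c t + d t"]) (simp add: sum.distrib distrib_right)
next
  fix a \<phi> assume "\<phi> \<in> lin_span I v"
  then obtain c where "\<phi> = (\<lambda>x. \<Sum>t\<in>I. c t * v t x)"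
    by (auto simp: lin_span_def)
  then show "(\<lambda>x. a * \<phi> x) \<in> lin_span I v"
    unfolding lin_span_def by (intro CollectI exI[of _ "\<lambda>t. a * c t"]) (simp add: sum_distrib_left mult.assoc)
qed

lemma in_lin_span:
  assumes "finite I" "s \<in> I"
  shows "v s \<in> lin_span I v"
proof -
  have "(\<Sum>t\<in>I. (if t = s then 1 else 0) * v t x) = (\<Sum>t\<in>I. if t = s then v t x else 0)" for x
    by (intro sum.cong) auto
  then have v_s: "v s = (\<lambda>x. \<Sum>t\<in>I. (if t = s then 1 else 0) * v t x)"
    using assms by (simp add: sum.delta')
  show ?thesis
    unfolding lin_span_def by (intro CollectI exI[of _ "\<lambda>t. if t = s then 1 else 0"]) (rule v_s)
qed

lemma dim_at_least_orthogonal: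
  assumes mem: "\<And>i. i < k \<Longrightarrow> v i \<in> M"
    and orth: "\<And>i i'. i < k \<Longrightarrow> i' < k \<Longrightarrow> i \<noteq> i' \<Longrightarrow> inner_q n (v i) (v i') = 0"
    and nonzero: "\<And>i. i < k \<Longrightarrow> inner_q n (v i) (v i) \<noteq> 0"
  shows "dim_at_least n M k"
  unfolding dim_at_least_def
proof (intro exI[of _ v] conjI allI impI)
  fix c :: "nat \<Rightarrow> complex" and i0
  assume zero: "\<forall>x\<in>basis n. (\<Sum>i<k. c i * v i x) = 0" and i0: "i0 < k"
  have "0 = (\<Sum>x\<in>basis n. cnj (v i0 x) * (\<Sum>i<k. c i * v i x))"
    using zero by simp
  also have "\<dots> = (\<Sum>i<k. c i * inner_q n (v i0) (v i))"
    unfolding inner_q_def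
    by (simp add: sum_distrib_left sum_distrib_right sum.swap[of _ "basis n"] mult_ac)
  also have "\<dots> = c i0 * inner_q n (v i0) (v i0)"
    using i0 orth by (subst sum.remove[of _ i0]) (auto intro!: sum.neutral)
  finally show "c i0 = 0"
    using nonzero[OF i0] by simp
qed (use mem in auto)

lemma dim_at_least_lin_span_orthogonal:
  assumes "finite I"
    and orth: "\<And>s t. s \<in> I \<Longrightarrow> t \<in> I \<Longrightarrow> s \<noteq> t \<Longrightarrow> inner_q n (v s) (v t) = 0"
    and nonzero: "\<And>t. t \<in> I \<Longrightarrow> inner_q n (v t) (v t) \<noteq> 0"
  shows "dim_at_least n (lin_span I v) (card I)"
proof -
  obtain h where h: "bij_betw h {..<card I} I"
    using ex_bij_betw_nat_finite[OF assms(1)] by (auto simp: atLeast0LessThan)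
  then have "h i \<in> I" "h i = h i' \<longleftrightarrow> i = i'" if "i < card I" "i' < card I" for i i'
    using that by (auto simp: bij_betw_def inj_on_def)
  then show ?thesis
    using assms by (intro dim_at_least_orthogonal[of _ "v \<circ> h"]) (auto intro: in_lin_span)
qed

definition block :: "nat \<Rightarrow> nat \<Rightarrow> nat set" where
  "block m j = {j * m..<j * m + m}"

definition block_monomial :: "nat \<Rightarrow> nat set \<Rightarrow> bool list \<Rightarrow> real" where
  "block_monomial m T x = (\<Prod>j\<in>T. spin_sum (block m j) x)"

definition code_word :: "nat \<Rightarrow> nat \<Rightarrow> nat set \<Rightarrow> qvec" where
  "code_word n m T x = (if length x = n then complex_of_real (block_monomial m T x) else 0)"

definition block_code :: "nat \<Rightarrow> nat \<Rightarrow> nat \<Rightarrow> qvec set" where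
  "block_code n m B = lin_span (Pow {..<B}) (code_word n m)"

lemma card_block [simp]: "card (block m j) = m"
  by (simp add: block_def)

lemma block_subset_lessThan:
  assumes "j < B" "B * m \<le> n"
  shows "block m j \<subseteq> {..<n}"
proof -
  have "(j + 1) * m \<le> B * m"
    using assms(1) by (intro mult_le_mono1) simp
  then show ?thesis
    using assms(2) by (auto simp: block_def)
qed

lemma block_disjoint: "k \<in> block m j \<Longrightarrow> k \<in> block m j' \<Longrightarrow> j = j'"
proof (induction j j' rule: linorder_wlog)
  case (le a b)
  show ?case
  proof (rule ccontr)
    assume "a \<noteq> b"
    then have "(a + 1) * m \<le> b * m"
      using le.hyps by (intro mult_le_mono1) simp
    then show False
      using le.prems by (auto simp: block_def)
  qed
qed auto

lemma flip_invariant_block_monomial: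
  "(\<And>j. j \<in> T \<Longrightarrow> k \<notin> block m j) \<Longrightarrow> flip_invariant k (block_monomial m T)"
  unfolding block_monomial_def by (intro flip_invariant_prod flip_invariant_spin_sum) auto

lemma flip_invariant_code_word:
  "(\<And>j. j \<in> T \<Longrightarrow> k \<notin> block m j) \<Longrightarrow> flip_invariant k (code_word n m T)"
  using flip_invariant_block_monomial[of T k m] by (simp add: flip_invariant_def code_word_def)

lemma inner_q_code_word:
  "inner_q n (code_word n m T) (code_word n m T') = complex_of_real (\<Sum>x\<in>basis n. block_monomial m T x * block_monomial m T' x)"
  by (simp add: inner_q_def code_word_def basis_def)

lemma sum_block_monomial_mult_eq_0:
  assumes "B * m \<le> n" "T \<subseteq> {..<B}" "j \<in> T" "j \<notin> T'"
  shows "(\<Sum>x\<in>basis n. block_monomial m T x * block_monomial m T' x) = 0"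
proof -
  have "finite T"
    using assms(2) finite_subset by blast
  then have "(\<Sum>x\<in>basis n. block_monomial m T x * block_monomial m T' x)
      = (\<Sum>x\<in>basis n. spin_sum (block m j) x * (block_monomial m (T - {j}) x * block_monomial m T' x))"
    using assms(3) by (simp add: block_monomial_def prod.remove mult.assoc)
  also have "\<dots> = 0"
  proof (rule sum_spin_sum_mult_invariant[OF block_subset_lessThan[OF _ assms(1)]])
    show "j < B"
      using assms(2,3) by blast
    fix k
    assume "k \<in> block m j"
    then show "flip_invariant k (\<lambda>x. block_monomial m (T - {j}) x * block_monomial m T' x)"
      using assms(4) block_disjoint
      by (intro flip_invariant_compose2[where f = "(*)"] flip_invariant_block_monomial) blast+
  qed
  finally show ?thesis .
qed

lemma code_words_orthogonal:
  assumes "B * m \<le> n" "T \<subseteq> {..<B}" "T' \<subseteq> {..<B}" "T \<noteq> T'"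
  shows "inner_q n (code_word n m T) (code_word n m T') = 0"
proof -
  obtain j where "j \<in> T \<and> j \<notin> T' \<or> j \<in> T' \<and> j \<notin> T"
    using assms(4) by blast
  then have "(\<Sum>x\<in>basis n. block_monomial m T x * block_monomial m T' x) = 0"
    using sum_block_monomial_mult_eq_0[OF assms(1,2), of j T']
      sum_block_monomial_mult_eq_0[OF assms(1,3), of j T]
    by (auto simp: mult.commute)
  then show ?thesis
    by (simp only: inner_q_code_word of_real_0)
qed

text \<open>Positivity is witnessed by the all-zero basis state, where every block magnetisation is \<open>m\<close>.\<close>

lemma code_word_nonzero:
  assumes "0 < m" "B * m \<le> n" "T \<subseteq> {..<B}"
  shows "inner_q n (code_word n m T) (code_word n m T) \<noteq> 0"
proof -
  let ?x = "replicate n False"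
  have "spin_sum (block m j) ?x = real m" if "j \<in> T" for j
  proof -
    have "block m j \<subseteq> {..<n}"
      using block_subset_lessThan[OF _ assms(2)] that assms(3) by auto
    then have "spin_sum (block m j) ?x = (\<Sum>k\<in>block m j. 1)"
      unfolding spin_sum_def by (intro sum.cong refl) (auto simp: bit_sign_def)
    then show ?thesis
      by simp
  qed
  then have "block_monomial m T ?x = real m ^ card T"
    by (simp add: block_monomial_def)
  then have "0 < (\<Sum>x\<in>basis n. block_monomial m T x * block_monomial m T x)"
    using assms(1) by (intro sum_pos2[OF finite_basis, of ?x]) (auto simp: basis_def)
  then show ?thesis
    unfolding inner_q_code_word of_real_eq_0_iff by linarith
qed

lemma block_code_spin_decomposition:
  assumes "\<psi> \<in> block_code n m B" "j < B"
  obtains A G where "\<And>k. k \<in> block m j \<Longrightarrow> flip_invariant k A"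
    "\<And>k. k \<in> block m j \<Longrightarrow> flip_invariant k G"
    "\<And>x. \<psi> x = A x + complex_of_real (spin_sum (block m j) x) * G x"
proof -
  obtain c where c: "\<psi> = (\<lambda>x. \<Sum>T\<in>Pow {..<B}. c T * code_word n m T x)"
    using assms(1) by (auto simp: block_code_def lin_span_def)
  define A where "A = (\<lambda>x. \<Sum>T\<in>Pow {..<B}. if j \<in> T then 0 else c T * code_word n m T x)"
  define G where "G = (\<lambda>x. \<Sum>T\<in>Pow {..<B}. if j \<in> T then c T * code_word n m (T - {j}) x else 0)"
  have inv: "flip_invariant k (code_word n m T)" if "k \<in> block m j" "j \<notin> T" for k T
    using that block_disjoint by (intro flip_invariant_code_word) blast
  have "c T * code_word n m T x = (if j \<in> T then 0 else c T * code_word n m T x)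
      + complex_of_real (spin_sum (block m j) x) * (if j \<in> T then c T * code_word n m (T - {j}) x else 0)"
    if "T \<in> Pow {..<B}" for T x
  proof -
    have "finite T"
      using that finite_subset by auto
    then show ?thesis
      by (simp add: code_word_def block_monomial_def prod.remove)
  qed
  then have "\<psi> x = (\<Sum>T\<in>Pow {..<B}. (if j \<in> T then 0 else c T * code_word n m T x)
      + complex_of_real (spin_sum (block m j) x) * (if j \<in> T then c T * code_word n m (T - {j}) x else 0))"
    for x
    unfolding c by (intro sum.cong) auto
  then have "\<psi> x = A x + complex_of_real (spin_sum (block m j) x) * G x" for x
    unfolding A_def G_def by (simp add: sum.distrib sum_distrib_left)
  moreover have "flip_invariant k A" if "k \<in> block m j" for k
    unfolding A_def using inv[OF that] by (intro flip_invariant_sum) (auto simp: flip_invariant_def)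
  moreover have "flip_invariant k G" if "k \<in> block m j" for k
    unfolding G_def using inv[OF that] by (intro flip_invariant_sum) (auto simp: flip_invariant_def)
  ultimately show ?thesis
    using that by blast
qed

lemma flip_energy_block_code:
  assumes "0 < m" "B * m \<le> n" "i < n" "\<psi> \<in> block_code n m B"
  shows "flip_energy n i \<psi> \<le> 4 / real m * sq_norm n \<psi>"
proof (cases "\<exists>j<B. i \<in> block m j")
  case True
  then obtain j where j: "j < B" "i \<in> block m j"
    by blast
  obtain A G where inv: "\<And>k. k \<in> block m j \<Longrightarrow> flip_invariant k A"
    "\<And>k. k \<in> block m j \<Longrightarrow> flip_invariant k G"
    and dec: "\<And>x. \<psi> x = A x + complex_of_real (spin_sum (block m j) x) * G x"
    using block_code_spin_decomposition[OF assms(4) j(1)] by blast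
  show ?thesis
    using flip_energy_spin_decomposition_le[OF block_subset_lessThan[OF j(1) assms(2)] j(2) inv dec]
    by simp
next
  case False
  obtain c where c: "\<psi> = (\<lambda>x. \<Sum>T\<in>Pow {..<B}. c T * code_word n m T x)"
    using assms(4) by (auto simp: block_code_def lin_span_def)
  have "flip_invariant i \<psi>"
    unfolding c using False
    by (intro flip_invariant_sum flip_invariant_compose[where f = "(*) (c _)"] flip_invariant_code_word) auto
  then have "flip_energy n i \<psi> = 0"
    by (simp add: flip_energy_def flip_invariant_def)
  then show ?thesis
    by (simp add: sq_norm_def sum_nonneg)
qed

lemma immune_block_code:
  assumes "0 < m" "B * m \<le> n"
  shows "immune n (E_bitflip n) (2 / real m) (block_code n m B)"
  unfolding immune_def E_bitflip_def
  using flip_energy_block_code[OF assms] by (auto intro!: inner_E_op_ge)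

lemma dim_block_code:
  assumes "0 < m" "B * m \<le> n"
  shows "dim_at_least n (block_code n m B) (2 ^ B)"
  using dim_at_least_lin_span_orthogonal[of "Pow {..<B}" n "code_word n m"]
    code_words_orthogonal[OF assms(2)] code_word_nonzero[OF assms]
  by (simp add: block_code_def card_Pow)

lemma is_subspace_block_code: "is_subspace n (block_code n m B)"
  unfolding block_code_def by (rule is_subspace_lin_span) (simp add: is_qvec_def code_word_def)

theorem theorem3:
  shows "\<exists>C::real. \<forall>n B::nat. 0 < B \<and> B < n \<longrightarrow>
    (\<exists>M \<epsilon>. is_subspace n M \<and> dim_at_least n M (2 ^ B) \<and>
       immune n (E_bitflip n) \<epsilon> M \<and> \<epsilon> \<le> C * real B * ln (real n) / real n)"
proof (intro exI[of _ "4 / ln 2"] allI impI)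
  fix n B :: nat
  assume nB: "0 < B \<and> B < n"
  define m where "m = n div B"
  have m: "0 < m" "B * m \<le> n"
    using nB by (simp_all add: m_def div_greater_zero_iff)
  have "n = B * m + n mod B" "n mod B < B" "B \<le> B * m"
    using nB m(1) by (simp_all add: m_def)
  then have "n \<le> 2 * B * m"
    by linarith
  then have "real n \<le> 2 * real B * real m"
    by (metis of_nat_le_iff of_nat_mult of_nat_numeral)
  then have "2 / real m \<le> 4 * real B / real n"
    using m(1) nB by (simp add: field_simps)
  also have "\<dots> \<le> 4 * real B / real n * (ln (real n) / ln 2)"
    using nB by (intro mult_le_cancel_left1[THEN iffD2]) (simp add: field_simps)
  also have "\<dots> = 4 / ln 2 * real B * ln (real n) / real n"
    by simp
  finally have "2 / real m \<le> 4 / ln 2 * real B * ln (real n) / real n" .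
  then show "\<exists>M \<epsilon>. is_subspace n M \<and> dim_at_least n M (2 ^ B) \<and>
      immune n (E_bitflip n) \<epsilon> M \<and> \<epsilon> \<le> 4 / ln 2 * real B * ln (real n) / real n"
    by (intro exI[of _ "block_code n m B"] exI[of _ "2 / real m"] conjI is_subspace_block_code
        dim_block_code[OF m] immune_block_code[OF m])
qed

end
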